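(* Let $C$ be a convex subset of a real separable Banach space $X$, and let $A,B$ be faces of $C$ with $\overline{A}\neq\overline{B}$. Then $\operatorname{fri} A\cap\operatorname{fri} B=\emptyset$.
   Context: For a convex set $C$, a convex subset $F\subseteq C$ is a face of $C$ if for every $x\in F$ and all $y,z\in C$ with $x\in(y,z)=\{(1-t)y+tz:t\in(0,1)\}$ we have $y,z\in F$; $F_{\min}(x,C)$ is the intersection of all faces of $C$ containing $x\in C$. The face relative interior of a convex set $D$ is $\operatorname{fri} D=\{x\in D: D\subseteq\overline{F_{\min}(x,D)}\}$. *)

theory Defs
  imports "HOL-Analysis.Analysis"
begin

definition F_min :: "'a::real_vector \<Rightarrow> 'a set \<Rightarrow> 'a set" where
  "F_min x C = \<Inter> {F. F face_of C \<and> x \<in> F}"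

definition fri :: "'a::real_normed_vector set \<Rightarrow> 'a set" where
  "fri D = {x \<in> D. D \<subseteq> closure (F_min x D)}"

end

theory Submission
  imports Defs
begin

text \<open>If x lies in fri A and in a face B of an ambient convex set containing A, then A \<inter> B is
  a face of A through x, so it contains F_min x A, whose closure covers A; hence A \<subseteq> closure B.
  Applied symmetrically to two faces sharing a point of fri A \<inter> fri B this forces
  closure A = closure B.\<close>

lemma F_min_subset_face:
  assumes "F face_of C" "x \<in> F"
  shows "F_min x C \<subseteq> F"
  using assms unfolding F_min_def by blast

lemma fri_subset_closure_face:
  assumes "convex A" "A \<subseteq> C" "B face_of C" "x \<in> fri A" "x \<in> B"
  shows "A \<subseteq> closure B"
proof -
  have "x \<in> A" and A_sub: "A \<subseteq> closure (F_min x A)"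
    using assms(4) unfolding fri_def by auto
  have "(B \<inter> A) face_of (C \<inter> A)"
    using face_of_Int_Int[OF assms(3) face_of_refl[OF assms(1)]] .
  then have "(B \<inter> A) face_of A"
    using assms(2) by (simp add: Int_absorb1)
  then have "F_min x A \<subseteq> B"
    using F_min_subset_face \<open>x \<in> A\<close> assms(5) by blast
  then show ?thesis
    using A_sub closure_mono by blast
qed

theorem proposition5p2:
  fixes C A B :: "'a::banach set"
  assumes "\<exists>D :: 'a set. countable D \<and> closure D = UNIV"
    and "convex C"
    and "A face_of C" and "B face_of C"
    and "closure A \<noteq> closure B"
  shows "fri A \<inter> fri B = {}"
proof (rule ccontr)
  assume "fri A \<inter> fri B \<noteq> {}"
  then obtain x where x: "x \<in> fri A" "x \<in> fri B" by blast
  then have "x \<in> A" "x \<in> B" unfolding fri_def by auto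
  have "A \<subseteq> closure B"
    using fri_subset_closure_face[OF face_of_imp_convex[OF assms(3)]
        face_of_imp_subset[OF assms(3)] assms(4) x(1) \<open>x \<in> B\<close>] .
  moreover have "B \<subseteq> closure A"
    using fri_subset_closure_face[OF face_of_imp_convex[OF assms(4)]
        face_of_imp_subset[OF assms(4)] assms(3) x(2) \<open>x \<in> A\<close>] .
  ultimately have "closure A = closure B"
    by (metis closure_closure closure_mono subset_antisym)
  with assms(5) show False by blast
qed

end
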